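(* Let $\mathcal{M}=(E,\mathcal{B})$ be a matroid. If $\operatorname{rk}(\mathcal{M})\le 2$ or $|E|\le 5$, then the base configuration $V_{\mathcal{M}}$ is $2$-level.
   Context: The base configuration of a matroid $\mathcal{M}=(E,\mathcal{B})$ is $V_{\mathcal{M}}=\{\mathbf{1}_B:B\in\mathcal{B}\}\subset\mathbb{R}^E$. For a finite point set $V$ and an affine function $\ell$ nonnegative on $V$, $\{v\in V:\ell(v)=0\}$ is a face; inclusion-maximal faces different from $V$ are facets and the corresponding $\ell$ facet-defining. $V$ is $k$-level if every facet-defining affine function takes at most $k$ distinct values on $V$. *)

theory Defs
  imports Main "HOL-Library.Indicator_Function"
begin

definition matroid :: "'a set \<Rightarrow> 'a set set \<Rightarrow> bool" where
  "matroid E \<B> \<longleftrightarrow> finite E \<and> \<B> \<noteq> {} \<and> (\<forall>B\<in>\<B>. B \<subseteq> E) \<and>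
     (\<forall>B1\<in>\<B>. \<forall>B2\<in>\<B>. \<forall>x\<in>B1 - B2. \<exists>y\<in>B2 - B1. insert y (B1 - {x}) \<in> \<B>)"

definition matroid_rank :: "'a set \<Rightarrow> 'a set set \<Rightarrow> nat" where
  "matroid_rank E \<B> = card (SOME B. B \<in> \<B>)"

text \<open>Points of R^E are functions E -> real (zero outside E).
  Base configuration: indicator vectors of the bases.\<close>
definition base_config :: "'a set \<Rightarrow> 'a set set \<Rightarrow> ('a \<Rightarrow> real) set" where
  "base_config E \<B> = {indicator B | B. B \<in> \<B>}"

definition aff_val :: "'a set \<Rightarrow> ('a \<Rightarrow> real) \<Rightarrow> real \<Rightarrow> ('a \<Rightarrow> real) \<Rightarrow> real" where
  "aff_val E a c v = c + (\<Sum>e\<in>E. a e * v e)"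

definition face :: "'a set \<Rightarrow> ('a \<Rightarrow> real) set \<Rightarrow> ('a \<Rightarrow> real) set \<Rightarrow> bool" where
  "face E V F \<longleftrightarrow> (\<exists>a c. (\<forall>v\<in>V. aff_val E a c v \<ge> 0) \<and> F = {v\<in>V. aff_val E a c v = 0})"

definition facet :: "'a set \<Rightarrow> ('a \<Rightarrow> real) set \<Rightarrow> ('a \<Rightarrow> real) set \<Rightarrow> bool" where
  "facet E V F \<longleftrightarrow> face E V F \<and> F \<noteq> V \<and>
     (\<forall>G. face E V G \<and> G \<noteq> V \<and> F \<subseteq> G \<longrightarrow> G = F)"

definition facet_defining :: "'a set \<Rightarrow> ('a \<Rightarrow> real) set \<Rightarrow> ('a \<Rightarrow> real) \<Rightarrow> real \<Rightarrow> bool" where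
  "facet_defining E V a c \<longleftrightarrow> (\<forall>v\<in>V. aff_val E a c v \<ge> 0) \<and> facet E V {v\<in>V. aff_val E a c v = 0}"

definition k_level :: "'a set \<Rightarrow> ('a \<Rightarrow> real) set \<Rightarrow> nat \<Rightarrow> bool" where
  "k_level E V k \<longleftrightarrow> (\<forall>a c. facet_defining E V a c \<longrightarrow> card (aff_val E a c ` V) \<le> k)"

end

theory Submission
  imports Defs
begin

text \<open>
  Let \<open>f\<close> be facet-defining for a finite point set \<open>V\<close>. If its facet is also the zero set of
  an affine \<open>g\<close> taking only the values 0 and 1 on \<open>V\<close>, then for the least positive value
  \<open>\<alpha>\<close> of \<open>f\<close> the function \<open>f - \<alpha> g\<close> is nonnegative and vanishes on a face strictly
  larger than the facet, hence on all of \<open>V\<close>; so \<open>f\<close> takes only the values \<open>0\<close> and \<open>\<alpha>\<close>.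

  On the base configuration \<open>f\<close> is a weighting of the bases, and its facet consists of the
  bases of minimum weight \<open>m\<close>, so one needs a 0/1-valued affine function vanishing on the
  minimum weight bases but not on all bases. If some element lies in a basis but in no
  minimum one, its indicator works. Otherwise, in rank two, it is \<open>1 - |B \<inter> T|\<close> for the set
  \<open>T\<close> of elements of weight below \<open>m/2\<close>; basis exchange rules out the cases in which this
  fails. If \<open>|E| \<le> 5\<close> and the rank is at least three, the dual matroid has rank at most two,
  and complementation transports minimum weight bases and 0/1 functions between the two.
\<close>

section \<open>Bases of a matroid\<close>

lemma matroid_basis_subset: "matroid E \<B> \<Longrightarrow> B \<in> \<B> \<Longrightarrow> B \<subseteq> E"
  unfolding matroid_def by blast

lemma matroid_basis_finite: "matroid E \<B> \<Longrightarrow> B \<in> \<B> \<Longrightarrow> finite B"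
  unfolding matroid_def by (meson finite_subset)

lemma matroid_exchange:
  "matroid E \<B> \<Longrightarrow> B1 \<in> \<B> \<Longrightarrow> B2 \<in> \<B> \<Longrightarrow> x \<in> B1 - B2 \<Longrightarrow>
    \<exists>y\<in>B2 - B1. insert y (B1 - {x}) \<in> \<B>"
  unfolding matroid_def by blast

lemma matroid_bases_card_eq:
  assumes M: "matroid E \<B>" and "B1 \<in> \<B>" "B2 \<in> \<B>"
  shows "card B1 = card B2"
proof -
  have "card B1 = card B2" if "B1 \<in> \<B>" "card (B1 - B2) = n" for n B1
    using that
  proof (induction n arbitrary: B1)
    case 0
    then have "B1 \<subseteq> B2"
      using matroid_basis_finite[OF M] by auto
    moreover have "B2 \<subseteq> B1"
    proof
      fix x assume "x \<in> B2"
      show "x \<in> B1"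
      proof (rule ccontr)
        assume "x \<notin> B1"
        with matroid_exchange[OF M \<open>B2 \<in> \<B>\<close> \<open>B1 \<in> \<B>\<close>, of x] \<open>x \<in> B2\<close> \<open>B1 \<subseteq> B2\<close>
        show False by blast
      qed
    qed
    ultimately show ?case by simp
  next
    case (Suc n)
    have fin: "finite B1" using matroid_basis_finite[OF M Suc.prems(1)] .
    obtain x where x: "x \<in> B1 - B2"
      using Suc.prems(2) by (metis card.empty ex_in_conv nat.distinct(1))
    obtain y where y: "y \<in> B2 - B1" "insert y (B1 - {x}) \<in> \<B>"
      using matroid_exchange[OF M Suc.prems(1) \<open>B2 \<in> \<B>\<close> x] by blast
    have "insert y (B1 - {x}) - B2 = (B1 - B2) - {x}"
      using x y by auto
    then have "card (insert y (B1 - {x})) = card B2"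
      using Suc.IH[OF y(2)] Suc.prems(2) x fin by simp
    moreover have "card (insert y (B1 - {x})) = card B1"
      using x y fin card_Suc_Diff1[OF fin, of x] by simp
    ultimately show ?case by simp
  qed
  then show ?thesis using \<open>B1 \<in> \<B>\<close> by blast
qed

lemma matroid_rank_eq_card: "matroid E \<B> \<Longrightarrow> B \<in> \<B> \<Longrightarrow> matroid_rank E \<B> = card B"
  unfolding matroid_rank_def by (metis matroid_bases_card_eq someI)

lemma matroid_dual_exchange:
  assumes M: "matroid E \<B>" and "B1 \<in> \<B>" "B2 \<in> \<B>" "x \<in> B2 - B1"
  shows "\<exists>y\<in>B1 - B2. insert x (B1 - {y}) \<in> \<B>"
proof -
  have "\<exists>y\<in>B1 - B2. insert x (B1 - {y}) \<in> \<B>"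
    if "B2 \<in> \<B>" "card (B2 - B1) = n" "x \<in> B2 - B1" for n B2
    using that
  proof (induction n arbitrary: B2)
    case 0
    then show ?case using matroid_basis_finite[OF M] by auto
  next
    case (Suc n)
    have fin1: "finite B1" and fin2: "finite B2"
      using matroid_basis_finite[OF M] \<open>B1 \<in> \<B>\<close> Suc.prems(1) by auto
    show ?case
    proof (cases "B2 - B1 = {x}")
      case True
      have "card (B1 - B2) = card (B2 - B1)"
        using matroid_bases_card_eq[OF M \<open>B1 \<in> \<B>\<close> Suc.prems(1)] fin1 fin2
        by (simp add: card_Diff_subset_Int Int_commute)
      then obtain y where y: "B1 - B2 = {y}"
        using True by (metis card_1_singletonE is_singletonI is_singleton_altdef)
      then have "insert x (B1 - {y}) = B2" using True by blast
      then show ?thesis using y Suc.prems(1) by auto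
    next
      case False
      then obtain z where z: "z \<in> B2 - B1" "z \<noteq> x" using Suc.prems(3) by blast
      obtain u where u: "u \<in> B1 - B2" "insert u (B2 - {z}) \<in> \<B>"
        using matroid_exchange[OF M Suc.prems(1) \<open>B1 \<in> \<B>\<close> z(1)] by blast
      have "insert u (B2 - {z}) - B1 = (B2 - B1) - {z}" using u z by auto
      then have "card (insert u (B2 - {z}) - B1) = n" using Suc.prems(2) z fin2 by simp
      then obtain y where "y \<in> B1 - insert u (B2 - {z})" "insert x (B1 - {y}) \<in> \<B>"
        using Suc.IH[OF u(2)] Suc.prems(3) z by auto
      then show ?thesis using z by auto
    qed
  qed
  then show ?thesis using assms by blast
qed

lemma matroid_dual:
  assumes M: "matroid E \<B>"
  shows "matroid E ((\<lambda>B. E - B) ` \<B>)"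
  unfolding matroid_def
proof (intro conjI ballI)
  show "finite E" "(\<lambda>B. E - B) ` \<B> \<noteq> {}" using M unfolding matroid_def by auto
next
  fix C assume "C \<in> (\<lambda>B. E - B) ` \<B>" then show "C \<subseteq> E" by auto
next
  fix C1 C2 x assume "C1 \<in> (\<lambda>B. E - B) ` \<B>" "C2 \<in> (\<lambda>B. E - B) ` \<B>" and x: "x \<in> C1 - C2"
  then obtain B1 B2 where B: "B1 \<in> \<B>" "C1 = E - B1" "B2 \<in> \<B>" "C2 = E - B2" by blast
  then obtain y where y: "y \<in> B1 - B2" "insert x (B1 - {y}) \<in> \<B>"
    using matroid_dual_exchange[OF M, of B1 B2 x] x by blast
  have "insert y (C1 - {x}) = E - insert x (B1 - {y})"
    using y B x matroid_basis_subset[OF M] by auto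
  moreover have "y \<in> C2 - C1" using y B matroid_basis_subset[OF M] by auto
  ultimately show "\<exists>y\<in>C2 - C1. insert y (C1 - {x}) \<in> (\<lambda>B. E - B) ` \<B>" using y by blast
qed

section \<open>Families of bases cut out by a 0/1 weighting\<close>

definition zero_one_separable :: "'a set set \<Rightarrow> 'a set set \<Rightarrow> bool" where
  "zero_one_separable \<B> F \<longleftrightarrow> (\<exists>(a :: 'a \<Rightarrow> real) c.
     (\<forall>B\<in>\<B>. c + sum a B \<in> {0, 1}) \<and> (\<forall>B\<in>F. c + sum a B = 0) \<and> (\<exists>B\<in>\<B>. c + sum a B = 1))"

lemma sum_indicator_real_eq_card: "finite B \<Longrightarrow> sum (indicator T) B = real (card (B \<inter> T))"
  by (simp add: indicator_def sum.If_cases Int_def)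

lemma zero_one_separable_empty: "\<B> \<noteq> {} \<Longrightarrow> zero_one_separable \<B> {}"
  unfolding zero_one_separable_def by (intro exI[of _ "\<lambda>_. 0"] exI[of _ 1]) auto

lemma zero_one_separable_avoiding:
  assumes fin: "\<forall>B\<in>\<B>. finite B" and "F \<subseteq> \<B>" and "e \<in> B0" "B0 \<in> \<B>"
    and avoid: "\<forall>B\<in>F. e \<notin> B"
  shows "zero_one_separable \<B> F"
proof -
  have "sum (indicator {e}) B = (if e \<in> B then 1 else 0 :: real)" if "B \<in> \<B>" for B
  proof -
    have "sum (indicator {e}) B = real (card (B \<inter> {e}))"
      using sum_indicator_real_eq_card fin that by blast
    then show ?thesis by (simp add: Int_insert_right)
  qed
  then show ?thesis
    unfolding zero_one_separable_def using assms
    by (intro exI[of _ "indicator {e}"] exI[of _ 0]) auto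
qed

lemma zero_one_separable_meeting:
  assumes fin: "\<forall>B\<in>\<B>. finite B" and le1: "\<forall>B\<in>\<B>. card (B \<inter> T) \<le> 1"
    and meet: "\<forall>B\<in>F. B \<inter> T \<noteq> {}" and "F \<subseteq> \<B>" and "B0 \<in> \<B>" "B0 \<inter> T = {}"
  shows "zero_one_separable \<B> F"
proof -
  define g :: "'a set \<Rightarrow> real" where "g B = 1 + sum (\<lambda>e. - indicator T e) B" for B
  have "g B = (if B \<inter> T = {} then 1 else 0)" if "B \<in> \<B>" for B
  proof -
    have "sum (indicator T) B = real (card (B \<inter> T))"
      using sum_indicator_real_eq_card fin that by blast
    moreover have "B \<inter> T = {} \<or> card (B \<inter> T) = 1"
      using le1 fin that by (metis card_0_eq finite_Int le_neq_implies_less less_one)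
    ultimately show ?thesis unfolding g_def by (auto simp: sum_negf)
  qed
  then have "\<forall>B\<in>\<B>. g B \<in> {0, 1}" "\<forall>B\<in>F. g B = 0" "\<exists>B\<in>\<B>. g B = 1"
    using meet \<open>F \<subseteq> \<B>\<close> \<open>B0 \<in> \<B>\<close> \<open>B0 \<inter> T = {}\<close> by auto
  then show ?thesis unfolding zero_one_separable_def g_def by blast
qed

lemma zero_one_separable_complements:
  assumes "finite E" and sub: "\<forall>B\<in>\<B>. B \<subseteq> E" and "F \<subseteq> \<B>"
    and sep: "zero_one_separable ((\<lambda>B. E - B) ` \<B>) ((\<lambda>B. E - B) ` F)"
  shows "zero_one_separable \<B> F"
proof -
  obtain a :: "'a \<Rightarrow> real" and c where sep_ac:
    "\<forall>B\<in>\<B>. c + sum a (E - B) \<in> {0, 1}" "\<forall>B\<in>F. c + sum a (E - B) = 0"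
    "\<exists>B\<in>\<B>. c + sum a (E - B) = 1"
    using sep unfolding zero_one_separable_def by auto
  define g where "g B = (c + sum a E) + sum (\<lambda>e. - a e) B" for B
  have "g B = c + sum a (E - B)" if "B \<in> \<B>" for B
    using sum_diff[OF \<open>finite E\<close> sub[rule_format, OF that], of a] unfolding g_def by (simp add: sum_negf)
  then have "\<forall>B\<in>\<B>. g B \<in> {0, 1}" "\<forall>B\<in>F. g B = 0" "\<exists>B\<in>\<B>. g B = 1"
    using sep_ac \<open>F \<subseteq> \<B>\<close> by auto
  then show ?thesis unfolding zero_one_separable_def g_def by blast
qed

section \<open>Minimum weight bases of small matroids\<close>

lemma card_2_obtain_other:
  assumes "card B = 2" "t \<in> B"
  obtains s where "s \<noteq> t" "B = {t, s}"
proof -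
  obtain x y where xy: "B = {x, y}" "x \<noteq> y" using assms(1) card_2_iff by metis
  show ?thesis
  proof (cases "t = x")
    case True
    then show ?thesis using that[of y] xy by simp
  next
    case False
    then have "t = y" using assms(2) xy by blast
    then show ?thesis using that xy by (simp add: insert_commute)
  qed
qed

lemma matroid_exchange_pair:
  assumes M: "matroid E \<B>" and "{t, s} \<in> \<B>" "B \<in> \<B>" "s \<notin> B" "s \<noteq> t"
  shows "\<exists>y\<in>B - {t, s}. {y, t} \<in> \<B>"
proof -
  obtain y where "y \<in> B - {t, s}" "insert y ({t, s} - {s}) \<in> \<B>"
    using matroid_exchange[OF M \<open>{t, s} \<in> \<B>\<close> \<open>B \<in> \<B>\<close>, of s] assms by blast
  moreover have "{t, s} - {s} = {t}" using \<open>s \<noteq> t\<close> by auto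
  ultimately show ?thesis by auto
qed

context
  fixes E :: "'a set" and \<B> :: "'a set set" and w :: "'a \<Rightarrow> real" and m :: real
  assumes M: "matroid E \<B>"
    and pairs: "\<forall>B\<in>\<B>. card B = 2"
    and min: "\<forall>B\<in>\<B>. m \<le> sum w B"
    and covered: "\<forall>e\<in>\<Union>\<B>. \<exists>B\<in>\<B>. e \<in> B \<and> sum w B = m"
begin

lemma min_weight_partner:
  assumes "e \<in> \<Union>\<B>"
  obtains f where "f \<noteq> e" "{e, f} \<in> \<B>" "w e + w f = m"
proof -
  obtain B where B: "B \<in> \<B>" "e \<in> B" "sum w B = m" using covered assms by blast
  then obtain f where "f \<noteq> e" "B = {e, f}" using pairs card_2_obtain_other by metis
  then show ?thesis using that B by auto
qed

lemma all_min_weight_if_min_basis_above_half: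
  assumes "B0 \<in> \<B>" "sum w B0 = m" and above: "\<forall>e\<in>B0. m / 2 \<le> w e"
  shows "\<forall>B\<in>\<B>. sum w B = m"
proof -
  obtain p q where B0: "B0 = {p, q}" "p \<noteq> q" using pairs \<open>B0 \<in> \<B>\<close> card_2_iff by metis
  then have half_B0: "w p = m / 2" "w q = m / 2" using assms by auto
  have above_all: "m / 2 \<le> w e" if e: "e \<in> \<Union>\<B>" for e
  proof (rule ccontr)
    assume below: "\<not> m / 2 \<le> w e"
    obtain f where f: "f \<noteq> e" "{e, f} \<in> \<B>" "w e + w f = m"
      using min_weight_partner[OF e] by blast
    then have "f \<notin> B0" using B0 half_B0 below by auto
    then obtain y where "y \<in> B0" "y \<noteq> e" "{y, e} \<in> \<B>"
      using matroid_exchange_pair[OF M f(2) \<open>B0 \<in> \<B>\<close>] f(1) by blast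
    moreover from this have "w y = m / 2" using B0 half_B0 by blast
    ultimately have "m \<le> m / 2 + w e" using min by force
    then show False using below by simp
  qed
  have half_all: "w e = m / 2" if e: "e \<in> \<Union>\<B>" for e
  proof -
    obtain f where f: "{e, f} \<in> \<B>" "w e + w f = m" using min_weight_partner[OF e] by blast
    then have "f \<in> \<Union>\<B>" by blast
    then show ?thesis using above_all[OF e] above_all[of f] f(2) by linarith
  qed
  show ?thesis
  proof
    fix B assume "B \<in> \<B>"
    then obtain u v where "B = {u, v}" "u \<noteq> v" using pairs card_2_iff by metis
    moreover have "w u = m / 2" "w v = m / 2"
      using half_all \<open>B \<in> \<B>\<close> \<open>B = {u, v}\<close> by blast+
    ultimately show "sum w B = m" by simp
  qed
qed

lemma all_min_weight_if_all_meet_below_half: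
  assumes below: "\<forall>B\<in>\<B>. \<exists>e\<in>B. w e < m / 2"
  shows "\<forall>B\<in>\<B>. sum w B = m"
proof
  fix B assume "B \<in> \<B>"
  then obtain t where "t \<in> B" and t: "w t < m / 2" using below by blast
  moreover have "card B = 2" using pairs \<open>B \<in> \<B>\<close> by blast
  ultimately obtain s where B: "s \<noteq> t" "B = {t, s}" using card_2_obtain_other by metis
  have "m \<le> w t + w s" using min \<open>B \<in> \<B>\<close> B by auto
  have "s \<in> \<Union>\<B>" "t \<in> \<Union>\<B>" using \<open>B \<in> \<B>\<close> B(2) by auto
  obtain t' where t': "{s, t'} \<in> \<B>" "w s + w t' = m"
    using min_weight_partner[OF \<open>s \<in> \<Union>\<B>\<close>] by blast
  obtain s' where s': "s' \<noteq> t" "{t, s'} \<in> \<B>" "w t + w s' = m"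
    using min_weight_partner[OF \<open>t \<in> \<Union>\<B>\<close>] by blast
  show "sum w B = m"
  proof (cases "t' = t")
    case True
    then show ?thesis using t'(2) B by simp
  next
    case False
    \<comment> \<open>Exchanging \<open>t\<close> out of the minimum pair \<open>{t, s'}\<close> against \<open>{s, t'}\<close>: the pair
      \<open>{s, s'}\<close> has no element of weight below \<open>m / 2\<close>, so the new basis is \<open>{t', s'}\<close>.\<close>
    have "{s', t} \<in> \<B>" using s'(2) by (simp add: insert_commute)
    moreover have "t \<notin> {s, t'}" "t \<noteq> s'" using False B(1) s'(1) by auto
    ultimately have "\<exists>y\<in>{s, t'} - {s', t}. {y, s'} \<in> \<B>"
      using matroid_exchange_pair[OF M _ t'(1)] by simp
    then obtain y where y: "y \<in> {s, t'} - {s', t}" "{y, s'} \<in> \<B>" by blast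
    have heavy: "\<not> w s < m / 2" "\<not> w s' < m / 2"
      using t s'(3) \<open>m \<le> w t + w s\<close> by linarith+
    show ?thesis
    proof (cases "y = s")
      case True
      then have "\<exists>e\<in>{s, s'}. w e < m / 2" using below y(2) by blast
      then show ?thesis using heavy by blast
    next
      case False
      then have "y = t'" "t' \<noteq> s'" using y(1) by auto
      then have "m \<le> w t' + w s'" using min y(2) by auto
      then show ?thesis using t'(2) s'(3) B \<open>m \<le> w t + w s\<close> by simp
    qed
  qed
qed

lemma min_weight_bases_separable_pairs:
  assumes proper: "\<exists>B\<in>\<B>. sum w B \<noteq> m"
  shows "zero_one_separable \<B> {B\<in>\<B>. sum w B = m}"
proof -
  define T where "T = {e. w e < m / 2}"
  have fin: "\<forall>B\<in>\<B>. finite B" using matroid_basis_finite[OF M] by blast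
  have "card (B \<inter> T) \<le> 1" if "B \<in> \<B>" for B
  proof -
    have "x = y" if xy: "x \<in> B \<inter> T" "y \<in> B \<inter> T" for x y
    proof (rule ccontr)
      assume "x \<noteq> y"
      moreover have "card B = 2" using pairs \<open>B \<in> \<B>\<close> by blast
      moreover obtain s where "B = {x, s}"
        using card_2_obtain_other[OF \<open>card B = 2\<close>] xy by blast
      ultimately have "B = {x, y}" using xy by blast
      then show False using min \<open>B \<in> \<B>\<close> xy \<open>x \<noteq> y\<close> unfolding T_def by fastforce
    qed
    then show ?thesis using fin \<open>B \<in> \<B>\<close> by (simp add: card_le_Suc0_iff_eq)
  qed
  moreover obtain B0 where "B0 \<in> \<B>" "B0 \<inter> T = {}"
  proof -
    have "\<not> (\<forall>B\<in>\<B>. \<exists>e\<in>B. w e < m / 2)"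
      using all_min_weight_if_all_meet_below_half proper by blast
    then show ?thesis using that unfolding T_def by blast
  qed
  moreover have "B \<inter> T \<noteq> {}" if "B \<in> \<B>" "sum w B = m" for B
  proof
    assume "B \<inter> T = {}"
    then have "\<forall>e\<in>B. m / 2 \<le> w e" unfolding T_def by auto
    then show False using all_min_weight_if_min_basis_above_half that proper by blast
  qed
  ultimately show ?thesis
    by (intro zero_one_separable_meeting[OF fin, of T _ B0]) auto
qed

end

lemma min_weight_bases_separable_rank_le_2:
  fixes w :: "'a \<Rightarrow> real"
  assumes M: "matroid E \<B>" and rank: "\<forall>B\<in>\<B>. card B \<le> 2"
    and min: "\<forall>B\<in>\<B>. m \<le> sum w B"
    and nonempty: "\<exists>B\<in>\<B>. sum w B = m" and proper: "\<exists>B\<in>\<B>. sum w B \<noteq> m"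
  shows "zero_one_separable \<B> {B\<in>\<B>. sum w B = m}"
proof (cases "\<forall>e\<in>\<Union>\<B>. \<exists>B\<in>\<B>. e \<in> B \<and> sum w B = m")
  case False
  then obtain e B0 where "e \<in> B0" "B0 \<in> \<B>" "\<forall>B\<in>{B\<in>\<B>. sum w B = m}. e \<notin> B" by blast
  moreover have "\<forall>B\<in>\<B>. finite B" using matroid_basis_finite[OF M] by blast
  ultimately show ?thesis by (intro zero_one_separable_avoiding[of _ _ e B0]) auto
next
  case covered: True
  obtain B0 where "B0 \<in> \<B>" "sum w B0 = m" using nonempty by blast
  have card_B0: "card B = card B0" if "B \<in> \<B>" for B
    using matroid_bases_card_eq[OF M that \<open>B0 \<in> \<B>\<close>] .
  show ?thesis
  proof (cases "card B0 = 2")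
    case True
    then show ?thesis
      using min_weight_bases_separable_pairs[OF M _ min covered proper] card_B0 by simp
  next
    case False
    \<comment> \<open>In rank at most one, covering \<open>e\<close> by a minimum basis forces that basis to be \<open>{e}\<close>.\<close>
    have "sum w B = m" if B: "B \<in> \<B>" for B
    proof (cases "B = {}")
      case True
      then have "B0 = {}" using card_B0[OF B] matroid_basis_finite[OF M \<open>B0 \<in> \<B>\<close>] by simp
      then show ?thesis using True \<open>sum w B0 = m\<close> by simp
    next
      case False
      then obtain e where "e \<in> B" by blast
      then obtain B' where B': "B' \<in> \<B>" "e \<in> B'" "sum w B' = m" using covered B by blast
      have "card B0 \<le> 2" using rank \<open>B0 \<in> \<B>\<close> by blast
      then have "card B \<le> 1" "card B' \<le> 1"
        using card_B0 B B'(1) \<open>card B0 \<noteq> 2\<close> by simp_all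
      moreover have "finite B" "finite B'" using matroid_basis_finite[OF M] B B'(1) by blast+
      ultimately have "B = {e}" "B' = {e}"
        using \<open>e \<in> B\<close> B'(2) by (auto simp: card_le_Suc0_iff_eq)
      then show ?thesis using B'(3) by simp
    qed
    then show ?thesis using proper by blast
  qed
qed

lemma min_weight_bases_separable:
  fixes w :: "'a \<Rightarrow> real"
  assumes M: "matroid E \<B>" and small: "matroid_rank E \<B> \<le> 2 \<or> card E \<le> 5"
    and min: "\<forall>B\<in>\<B>. m \<le> sum w B"
    and nonempty: "\<exists>B\<in>\<B>. sum w B = m" and proper: "\<exists>B\<in>\<B>. sum w B \<noteq> m"
  shows "zero_one_separable \<B> {B\<in>\<B>. sum w B = m}"
proof (cases "matroid_rank E \<B> \<le> 2")
  case True
  then have "\<forall>B\<in>\<B>. card B \<le> 2" using matroid_rank_eq_card[OF M] by metis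
  then show ?thesis using min_weight_bases_separable_rank_le_2[OF M _ min nonempty proper] by blast
next
  case False
  \<comment> \<open>Pass to the dual matroid, of rank \<open>|E| - rank \<le> 2\<close>, with weights \<open>-w\<close>: complementation
    shifts the weight of every basis by \<open>- sum w E\<close>.\<close>
  have fin: "finite E" and sub: "\<forall>B\<in>\<B>. B \<subseteq> E" using M unfolding matroid_def by auto
  define D where "D = (\<lambda>B. E - B) ` \<B>"
  define w' where "w' e = - w e" for e
  define m' where "m' = m - sum w E"
  have weight_compl: "sum w' (E - B) = m' \<longleftrightarrow> sum w B = m"
    "m' \<le> sum w' (E - B) \<longleftrightarrow> m \<le> sum w B" if "B \<in> \<B>" for B
    using sum_diff[OF fin sub[rule_format, OF that], of w]
    unfolding w'_def m'_def by (simp_all add: sum_negf)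
  have "card (E - B) \<le> 2" if "B \<in> \<B>" for B
  proof -
    have "card (E - B) = card E - card B"
      using card_Diff_subset[OF matroid_basis_finite[OF M that] sub[rule_format, OF that]] .
    then show ?thesis using False small matroid_rank_eq_card[OF M that] by simp
  qed
  then have "\<forall>C\<in>D. card C \<le> 2" unfolding D_def by blast
  moreover have "\<forall>C\<in>D. m' \<le> sum w' C" "\<exists>C\<in>D. sum w' C = m'" "\<exists>C\<in>D. sum w' C \<noteq> m'"
    unfolding D_def using weight_compl min nonempty proper by auto
  ultimately have "zero_one_separable D {C\<in>D. sum w' C = m'}"
    using min_weight_bases_separable_rank_le_2[OF matroid_dual[OF M]] unfolding D_def by blast
  moreover have "{C\<in>D. sum w' C = m'} = (\<lambda>B. E - B) ` {B\<in>\<B>. sum w B = m}"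
    unfolding D_def using weight_compl by auto
  ultimately show ?thesis
    using zero_one_separable_complements[OF fin sub] unfolding D_def by auto
qed

section \<open>Facets of point configurations\<close>

lemma aff_val_indicator: "finite E \<Longrightarrow> B \<subseteq> E \<Longrightarrow> aff_val E a c (indicator B) = c + sum a B"
  unfolding aff_val_def by (simp add: Int_absorb1)

lemma aff_val_diff_scaled:
  "aff_val E (\<lambda>e. a e - t * a' e) (c - t * c') v = aff_val E a c v - t * aff_val E a' c' v"
  unfolding aff_val_def by (simp add: algebra_simps sum_subtractf sum_distrib_left)

lemma facet_maximal: "facet E V F \<Longrightarrow> face E V G \<Longrightarrow> G \<noteq> V \<Longrightarrow> F \<subseteq> G \<Longrightarrow> G = F"
  unfolding facet_def by blast

lemma face_zero_set: "\<forall>v\<in>V. 0 \<le> aff_val E a c v \<Longrightarrow> face E V {v\<in>V. aff_val E a c v = 0}"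
  unfolding face_def by blast

lemma facet_defining_two_levels:
  assumes fin: "finite V" and fd: "facet_defining E V a c"
    and g01: "\<forall>v\<in>V. aff_val E a' c' v \<in> {0, 1}"
    and zeros: "\<forall>v\<in>V. aff_val E a c v = 0 \<longrightarrow> aff_val E a' c' v = 0"
    and g1: "\<exists>v\<in>V. aff_val E a' c' v = 1"
  shows "card (aff_val E a c ` V) \<le> 2"
proof -
  let ?f = "aff_val E a c" and ?g = "aff_val E a' c'"
  define F where "F = {v\<in>V. ?f v = 0}"
  have nonneg: "\<forall>v\<in>V. 0 \<le> ?f v" and facet: "facet E V F"
    using fd unfolding facet_defining_def F_def by auto
  have "{v\<in>V. ?g v = 0} = F"
  proof (rule facet_maximal[OF facet])
    show "face E V {v\<in>V. ?g v = 0}" using g01 by (intro face_zero_set) auto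
    show "{v\<in>V. ?g v = 0} \<noteq> V" using g1 by (metis (mono_tags) mem_Collect_eq zero_neq_one)
    show "F \<subseteq> {v\<in>V. ?g v = 0}" using zeros unfolding F_def by auto
  qed
  then have g_F: "\<forall>v\<in>F. ?g v = 0" and g_rest: "\<forall>v\<in>V - F. ?g v = 1" using g01 by auto
  have "F \<noteq> V" using facet unfolding facet_def by blast
  then have "V - F \<noteq> {}" unfolding F_def by blast
  define \<alpha> where "\<alpha> = Min (?f ` (V - F))"
  have "\<alpha> \<in> ?f ` (V - F)" unfolding \<alpha>_def using fin \<open>V - F \<noteq> {}\<close> by (intro Min_in) auto
  then obtain v0 where v0: "v0 \<in> V - F" "?f v0 = \<alpha>" by auto
  have \<alpha>_le: "\<forall>v\<in>V - F. \<alpha> \<le> ?f v" using fin unfolding \<alpha>_def by simp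
  define h where "h = aff_val E (\<lambda>e. a e - \<alpha> * a' e) (c - \<alpha> * c')"
  have h_eq: "h v = ?f v - \<alpha> * ?g v" for v unfolding h_def by (rule aff_val_diff_scaled)
  have "\<forall>v\<in>V. 0 \<le> h v"
  proof
    fix v assume "v \<in> V"
    show "0 \<le> h v"
    proof (cases "v \<in> F")
      case True
      then show ?thesis using h_eq g_F unfolding F_def by simp
    next
      case False
      then show ?thesis using h_eq g_rest \<alpha>_le \<open>v \<in> V\<close> by simp
    qed
  qed
  then have "face E V {v\<in>V. h v = 0}" unfolding h_def by (rule face_zero_set)
  moreover have "F \<subseteq> {v\<in>V. h v = 0}" using h_eq g_F unfolding F_def by auto
  moreover have "v0 \<in> {v\<in>V. h v = 0} - F" using v0 h_eq g_rest by auto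
  ultimately have "{v\<in>V. h v = 0} = V" using facet_maximal[OF facet] by blast
  then have "\<forall>v\<in>V. ?f v = \<alpha> * ?g v" using h_eq by auto
  then have "?f ` V \<subseteq> {0, \<alpha>}" using g01 by auto
  then have "card (?f ` V) \<le> card {0, \<alpha>}" by (rule card_mono[rotated]) simp
  also have "\<dots> \<le> 2" by (cases "\<alpha> = 0") simp_all
  finally show ?thesis .
qed

lemma base_config_two_level:
  fixes \<B> :: "'a set set"
  assumes M: "matroid E \<B>"
    and sep: "\<And>(w :: 'a \<Rightarrow> real) m. \<forall>B\<in>\<B>. m \<le> sum w B \<Longrightarrow> \<exists>B\<in>\<B>. sum w B = m \<Longrightarrow>
      \<exists>B\<in>\<B>. sum w B \<noteq> m \<Longrightarrow> zero_one_separable \<B> {B\<in>\<B>. sum w B = m}"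
  shows "k_level E (base_config E \<B>) 2"
  unfolding k_level_def
proof (intro allI impI)
  fix a c assume fd: "facet_defining E (base_config E \<B>) a c"
  have "finite E" and sub: "\<forall>B\<in>\<B>. B \<subseteq> E" and "\<B> \<noteq> {}" using M unfolding matroid_def by auto
  have V: "base_config E \<B> = indicator ` \<B>" unfolding base_config_def by blast
  have "finite \<B>" using sub \<open>finite E\<close> by (meson Pow_iff finite_Pow_iff finite_subset subsetI)
  have val: "aff_val E a' c' (indicator B) = c' + sum a' B" if "B \<in> \<B>" for a' c' B
    using aff_val_indicator[OF \<open>finite E\<close>] sub that by blast
  have min: "\<forall>B\<in>\<B>. - c \<le> sum a B"
    using fd val unfolding facet_defining_def V by force
  have "{v\<in>base_config E \<B>. aff_val E a c v = 0} \<noteq> base_config E \<B>"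
    using fd unfolding facet_defining_def facet_def by blast
  then have proper: "\<exists>B\<in>\<B>. sum a B \<noteq> - c" unfolding V using val by force
  have "zero_one_separable \<B> {B\<in>\<B>. sum a B = - c}"
  proof (cases "\<exists>B\<in>\<B>. sum a B = - c")
    case True
    then show ?thesis by (rule sep[OF min _ proper])
  next
    case False
    then have "{B\<in>\<B>. sum a B = - c} = {}" by blast
    then show ?thesis using zero_one_separable_empty[OF \<open>\<B> \<noteq> {}\<close>] by (simp only:)
  qed
  then obtain a' :: "'a \<Rightarrow> real" and c' where sep_ac:
    "\<forall>B\<in>\<B>. c' + sum a' B \<in> {0, 1}" "\<forall>B\<in>{B\<in>\<B>. sum a B = - c}. c' + sum a' B = 0"
    "\<exists>B\<in>\<B>. c' + sum a' B = 1"
    unfolding zero_one_separable_def by blast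
  show "card (aff_val E a c ` base_config E \<B>) \<le> 2"
  proof (rule facet_defining_two_levels[OF _ fd])
    show "finite (base_config E \<B>)" unfolding V using \<open>finite \<B>\<close> by simp
    show "\<forall>v\<in>base_config E \<B>. aff_val E a' c' v \<in> {0, 1}"
      unfolding V using sep_ac(1) val by auto
    show "\<forall>v\<in>base_config E \<B>. aff_val E a c v = 0 \<longrightarrow> aff_val E a' c' v = 0"
      unfolding V using sep_ac(2) val by auto
    show "\<exists>v\<in>base_config E \<B>. aff_val E a' c' v = 1"
      unfolding V using sep_ac(3) val by auto
  qed
qed

theorem proposition3p1:
  fixes E :: "'a set" and \<B> :: "'a set set"
  assumes "matroid E \<B>"
    and "matroid_rank E \<B> \<le> 2 \<or> card E \<le> 5"
  shows "k_level E (base_config E \<B>) 2"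
  using base_config_two_level min_weight_bases_separable assms by blast

end
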